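(* Let $q\geq 3$ be odd, let $(v,w)$ be a reduced fraction with $v/w\in\Gamma_q.\infty\cap(0,1]$, and let $n\in\mathbb{N}$. The map \[ W_{q,n}\to\mathrm{RF}_{q,n}(v,w),\qquad \begin{bmatrix}a&b\\c&d\end{bmatrix}\mapsto(av+bw,\,cv+dw) \] (using representing matrices of determinant $\pm1$) is well defined, i.e. $(av+bw,cv+dw)$ is the reduced fraction representing $h.(v/w)$. If $v/w\in(0,1)$ it is a bijection; if $v/w=1$ it is surjective and exactly $2:1$ (each element of $\mathrm{RF}_{q,n}(1,1)$ has exactly two preimages).
   Context: Setup. Let $q\geq 3$ be odd and $\lambda=2\cos(\pi/q)$. Elements of $\mathrm{PGL}_2(\mathbb{R})$ are written as matrices (up to nonzero scalar) and act on $\mathbb{R}\cup\{\infty\}$ by $x\mapsto(ax+b)/(cx+d)$, written $g.x$. $\Gamma_q\subset\mathrm{PSL}_2(\mathbb{R})$ is generated by $T=\begin{bmatrix}1&\lambda\\0&1\end{bmatrix}$ and $S=\begin{bmatrix}0&1\\-1&0\end{bmatrix}$. Put $s(x)=\sin(x\pi/q)/\sin(\pi/q)$, $g_k=\begin{bmatrix}s(k)&-s(k+1)\\-s(k-1)&s(k)\end{bmatrix}\in\Gamma_q$ (determinant $1$), $Q=\begin{bmatrix}0&1\\1&0\end{bmatrix}$, $K=\{(q+1)/2,\dots,q-1\}$. The generalized Farey map $F_q\colon[0,1]\to[0,1]$ is $F_q(x)=g_k.x$ on $[g_k^{-1}.0,g_k^{-1}.1]$ and $F_q(x)=Qg_k.x$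 on $[(Qg_k)^{-1}.1,(Qg_k)^{-1}.0]$, $k\in K$. $\Lambda_q=\{g_k^{-1},(Qg_k)^{-1}:k\in K\}$ generates a free semigroup; $W_{q,n}$ is the set of its words of length $n$. A pair $(a,c)\in\mathbb{Z}[\lambda]^2$ is a reduced fraction if some element of $\Gamma_q$ has a determinant-$1$ representing matrix $\begin{bmatrix}a&*\\c&*\end{bmatrix}$; $(a,c)\sim(-a,-c)$ and the class is identified with $a/c$. $\mathrm{RF}_{q,n}(v,w)$ is the set of reduced fractions $(r,s)$ with $r/s\in F_q^{-n}(v/w)$. *)

theory Defs
  imports Complex_Main
begin

section \<open>2x2 real matrices, written (a,b,c,d) for [[a,b],[c,d]]\<close>

type_synonym mat2 = "real \<times> real \<times> real \<times> real"

definition mmul :: "mat2 \<Rightarrow> mat2 \<Rightarrow> mat2" where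
  "mmul M N = (case M of (a,b,c,d) \<Rightarrow> case N of (e,f,g,h) \<Rightarrow>
      (a*e + b*g, a*f + b*h, c*e + d*g, c*f + d*h))"

definition mdet :: "mat2 \<Rightarrow> real" where
  "mdet M = (case M of (a,b,c,d) \<Rightarrow> a*d - b*c)"

definition minv :: "mat2 \<Rightarrow> mat2" where
  "minv M = (case M of (a,b,c,d) \<Rightarrow> (d / mdet M, - b / mdet M, - c / mdet M, a / mdet M))"

definition mid :: mat2 where "mid = (1,0,0,1)"

definition mob :: "mat2 \<Rightarrow> real \<Rightarrow> real" where
  "mob M x = (case M of (a,b,c,d) \<Rightarrow> (a*x + b) / (c*x + d))"

definition wprod :: "mat2 list \<Rightarrow> mat2" where
  "wprod ws = foldr mmul ws mid"

definition lam :: "nat \<Rightarrow> real" where "lam q = 2 * cos (pi / real q)"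

definition Tm :: "nat \<Rightarrow> mat2" where "Tm q = (1, lam q, 0, 1)"
definition Tinvm :: "nat \<Rightarrow> mat2" where "Tinvm q = (1, - lam q, 0, 1)"
definition Sm :: mat2 where "Sm = (0, 1, -1, 0)"
definition Qm :: mat2 where "Qm = (0, 1, 1, 0)"

text \<open>All determinant-1 matrices representing elements of Gamma_q, i.e. the
  preimage of Gamma_q = <T,S> in SL_2(R) (it contains -I = S^2).\<close>
inductive_set GammaMat :: "nat \<Rightarrow> mat2 set" for q :: nat where
  gm_id: "mid \<in> GammaMat q"
| gm_T: "M \<in> GammaMat q \<Longrightarrow> mmul (Tm q) M \<in> GammaMat q"
| gm_Tinv: "M \<in> GammaMat q \<Longrightarrow> mmul (Tinvm q) M \<in> GammaMat q"
| gm_S: "M \<in> GammaMat q \<Longrightarrow> mmul Sm M \<in> GammaMat q"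

inductive_set Zlam :: "nat \<Rightarrow> real set" for q :: nat where
  zl_one: "1 \<in> Zlam q"
| zl_lam: "lam q \<in> Zlam q"
| zl_diff: "x \<in> Zlam q \<Longrightarrow> y \<in> Zlam q \<Longrightarrow> x - y \<in> Zlam q"
| zl_mult: "x \<in> Zlam q \<Longrightarrow> y \<in> Zlam q \<Longrightarrow> x * y \<in> Zlam q"

definition reduced_frac :: "nat \<Rightarrow> real \<Rightarrow> real \<Rightarrow> bool" where
  "reduced_frac q a c \<longleftrightarrow> a \<in> Zlam q \<and> c \<in> Zlam q \<and>
     (\<exists>b d. (a, b, c, d) \<in> GammaMat q)"

definition pmclass :: "real \<Rightarrow> real \<Rightarrow> (real \<times> real) set" where
  "pmclass a c = {(a, c), (- a, - c)}"

definition sq :: "nat \<Rightarrow> real \<Rightarrow> real" where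
  "sq q x = sin (x * pi / real q) / sin (pi / real q)"

definition gk :: "nat \<Rightarrow> nat \<Rightarrow> mat2" where
  "gk q k = (sq q (real k), - sq q (real k + 1), - sq q (real k - 1), sq q (real k))"

definition Kset :: "nat \<Rightarrow> nat set" where
  "Kset q = {(q + 1) div 2 .. q - 1}"

definition Fbranch :: "nat \<Rightarrow> real \<Rightarrow> real \<Rightarrow> bool" where
  "Fbranch q x y \<longleftrightarrow> (\<exists>k\<in>Kset q.
      (x \<in> {mob (minv (gk q k)) 0 .. mob (minv (gk q k)) 1} \<and> y = mob (gk q k) x) \<or>
      (x \<in> {mob (minv (mmul Qm (gk q k))) 1 .. mob (minv (mmul Qm (gk q k))) 0} \<and>
         y = mob (mmul Qm (gk q k)) x))"

definition Fq :: "nat \<Rightarrow> real \<Rightarrow> real" where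
  "Fq q x = (SOME y. Fbranch q x y)"

text \<open>The generators Lambda_q, as representing matrices of determinant +-1.\<close>
definition LamSet :: "nat \<Rightarrow> mat2 set" where
  "LamSet q = {minv (gk q k) | k. k \<in> Kset q} \<union> {minv (mmul Qm (gk q k)) | k. k \<in> Kset q}"

definition Words :: "nat \<Rightarrow> nat \<Rightarrow> mat2 list set" where
  "Words q n = {ws. length ws = n \<and> set ws \<subseteq> LamSet q}"

text \<open>RF_{q,n}(v,w): classes of reduced fractions (r,s) with r/s in F_q^{-n}(v/w).
  Since F_q^{-n}(v/w) \<subseteq> [0,1], r/s is finite, i.e. s \<noteq> 0.\<close>
definition RF :: "nat \<Rightarrow> nat \<Rightarrow> real \<Rightarrow> real \<Rightarrow> (real \<times> real) set set" where
  "RF q n v w = {pmclass r s | r s. reduced_frac q r s \<and> s \<noteq> 0 \<and>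
      r / s \<in> {0..1} \<and> (Fq q ^^ n) (r / s) = v / w}"

definition wmap :: "real \<Rightarrow> real \<Rightarrow> mat2 list \<Rightarrow> (real \<times> real) set" where
  "wmap v w ws = (case wprod ws of (a,b,c,d) \<Rightarrow> pmclass (a*v + b*w) (c*v + d*w))"

end

theory Submission
  imports Defs
begin

text \<open>Each generator in \<open>\<Lambda>\<^sub>q\<close> is the inverse of a branch of \<open>F\<^sub>q\<close>: a monotone Moebius map
  sending \<open>[0,1]\<close> onto the domain of that branch. These domains tile \<open>[0,1]\<close> and overlap only
  in end points: the two branches for the same \<open>k\<close> meet at a preimage of \<open>1\<close>, branches for
  neighbouring \<open>k\<close> at a preimage of \<open>0\<close>. So for \<open>x \<in> (0,1]\<close> the preimages \<open>F\<^sub>q\<^sup>-\<^sup>n(x)\<close> are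
  exactly the points \<open>h.x\<close>, \<open>h \<in> W\<^sub>q\<^sub>,\<^sub>n\<close>, all distinct if \<open>x < 1\<close>, and coinciding exactly for
  words differing only in the last letter if \<open>x = 1\<close>.
  On the level of fractions, \<open>h\<close> maps reduced fractions to reduced fractions, and a reduced
  fraction is determined up to sign by its value: the stabiliser of \<open>\<infinity>\<close> in \<open>\<Gamma>\<^sub>q\<close> has
  diagonal entries \<open>\<plusminus>1\<close>, as a ping-pong argument on the normal forms of \<open>\<Gamma>\<^sub>q = \<langle>S\<rangle> * \<langle>V\<rangle>\<close>
  shows.\<close>

section \<open>Matrices and Moebius transformations\<close>

definition mneg :: "mat2 \<Rightarrow> mat2" where
  "mneg M = (case M of (a,b,c,d) \<Rightarrow> (-a,-b,-c,-d))"

definition madj :: "mat2 \<Rightarrow> mat2" where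
  "madj M = (case M of (a,b,c,d) \<Rightarrow> (d,-b,-c,a))"

definition mapply :: "mat2 \<Rightarrow> real \<times> real \<Rightarrow> real \<times> real" where
  "mapply M p = (case M of (a,b,c,d) \<Rightarrow> case p of (x,y) \<Rightarrow> (a*x + b*y, c*x + d*y))"

lemma mmul_assoc: "mmul (mmul A B) C = mmul A (mmul B C)"
  by (cases A; cases B; cases C) (simp add: mmul_def algebra_simps)

lemma mmul_mid [simp]: "mmul mid A = A" "mmul A mid = A"
  by (cases A; simp add: mmul_def mid_def)+

lemma mmul_mneg [simp]: "mmul (mneg A) B = mneg (mmul A B)" "mmul A (mneg B) = mneg (mmul A B)"
  by (cases A; cases B; simp add: mmul_def mneg_def)+

lemma mneg_mneg [simp]: "mneg (mneg A) = A"
  by (cases A) (simp add: mneg_def)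

lemma mdet_mmul: "mdet (mmul A B) = mdet A * mdet B"
  by (cases A; cases B) (simp add: mmul_def mdet_def algebra_simps)

lemma madj_mmul: "madj (mmul A B) = mmul (madj B) (madj A)"
  by (cases A; cases B) (simp add: mmul_def madj_def algebra_simps)

lemma mapply_mid [simp]: "mapply mid p = p"
  by (cases p) (simp add: mapply_def mid_def)

lemma mapply_mmul: "mapply (mmul A B) p = mapply A (mapply B p)"
  by (cases A; cases B; cases p) (simp add: mmul_def mapply_def algebra_simps)

lemma mapply_mneg: "mapply (mneg A) p = (- fst (mapply A p), - snd (mapply A p))"
  by (cases A; cases p) (simp add: mneg_def mapply_def)

lemma mapply_uminus: "mapply M (-x, -y) = (- fst (mapply M (x,y)), - snd (mapply M (x,y)))"
  by (cases M) (simp add: mapply_def)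

lemma mapply_scale: "mapply M (c*x, c*y) = (c * fst (mapply M (x,y)), c * snd (mapply M (x,y)))"
  by (cases M) (simp add: mapply_def algebra_simps)

lemma mob_mid [simp]: "mob mid y = y"
  by (simp add: mob_def mid_def)

lemma mob_mapply_ratio:
  assumes "r \<noteq> 0"
  shows "fst (mapply M (p,r)) / snd (mapply M (p,r)) = mob M (p/r)"
proof -
  obtain a b c d where M: "M = (a,b,c,d)" by (cases M)
  have "(a*p + b*r) / (c*p + d*r) = ((a*p + b*r)/r) / ((c*p + d*r)/r)"
    using assms by simp
  also have "\<dots> = (a*(p/r) + b) / (c*(p/r) + d)"
    using assms by (simp add: add_divide_distrib)
  finally show ?thesis by (simp add: M mapply_def mob_def)
qed

lemma mob_mmul:
  assumes "snd (mapply B (y,1)) \<noteq> 0"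
  shows "mob (mmul A B) y = mob A (mob B y)"
proof -
  obtain p r where pr: "mapply B (y,1) = (p,r)" by fastforce
  have "mob B y = p/r"
    using mob_mapply_ratio[of 1 B y] pr by simp
  moreover have "mob (mmul A B) y = mob A (p/r)"
    using mob_mapply_ratio[of 1 "mmul A B" y] mob_mapply_ratio[of r A p] assms pr
    by (simp add: mapply_mmul)
  ultimately show ?thesis by simp
qed

lemma mob_diff:
  "c*y1 + d \<noteq> 0 \<Longrightarrow> c*y2 + d \<noteq> 0 \<Longrightarrow>
   mob (a,b,c,d) y1 - mob (a,b,c,d) y2 = (a*d - b*c) * (y1 - y2) / ((c*y1 + d)*(c*y2 + d))"
  by (simp add: mob_def field_simps)

lemma mob_strict_mono:
  assumes "0 < mdet M" "0 < snd (mapply M (y1,1))" "0 < snd (mapply M (y2,1))" "y1 < y2"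
  shows "mob M y1 < mob M y2"
proof -
  obtain a b c d where M: "M = (a,b,c,d)" by (cases M)
  have "mob M y1 - mob M y2 = (a*d - b*c) * (y1 - y2) / ((c*y1 + d)*(c*y2 + d))"
    using assms(2,3) by (simp add: M mapply_def mob_diff)
  moreover have "(a*d - b*c) * (y1 - y2) < 0" "0 < (c*y1 + d)*(c*y2 + d)"
    using assms by (simp_all add: M mdet_def mapply_def mult_pos_neg)
  ultimately have "mob M y1 - mob M y2 < 0" by (simp add: divide_neg_pos)
  thus ?thesis by simp
qed

lemma mob_strict_anti:
  assumes "mdet M < 0" "0 < snd (mapply M (y1,1))" "0 < snd (mapply M (y2,1))" "y1 < y2"
  shows "mob M y2 < mob M y1"
proof -
  obtain a b c d where M: "M = (a,b,c,d)" by (cases M)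
  have "mob M y1 - mob M y2 = (a*d - b*c) * (y1 - y2) / ((c*y1 + d)*(c*y2 + d))"
    using assms(2,3) by (simp add: M mapply_def mob_diff)
  moreover have "0 < (a*d - b*c) * (y1 - y2)" "0 < (c*y1 + d)*(c*y2 + d)"
    using assms by (simp_all add: M mdet_def mapply_def mult_neg_neg)
  ultimately have "0 < mob M y1 - mob M y2" by simp
  thus ?thesis by simp
qed

lemma pmclass_uminus: "pmclass (-a) (-c) = pmclass a c"
  by (auto simp: pmclass_def)

lemma pmclass_eqD:
  assumes "pmclass a c = pmclass a' c'"
  shows "(a' = a \<and> c' = c) \<or> (a' = -a \<and> c' = -c)"
proof -
  have "(a',c') \<in> pmclass a c" unfolding assms by (simp add: pmclass_def)
  thus ?thesis by (auto simp: pmclass_def)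
qed

lemma pmclass_eq_ratio: "pmclass a c = pmclass a' c' \<Longrightarrow> a'/c' = a/(c::real)"
  by (auto dest: pmclass_eqD)

section \<open>The Hecke group and reduced fractions\<close>

lemma GammaMat_mmul: "M \<in> GammaMat q \<Longrightarrow> N \<in> GammaMat q \<Longrightarrow> mmul M N \<in> GammaMat q"
  by (induction rule: GammaMat.induct) (auto simp: mmul_assoc intro: GammaMat.intros)

lemma Tm_GammaMat: "Tm q \<in> GammaMat q"
  using GammaMat.gm_T[OF GammaMat.gm_id] by simp

lemma Tinvm_GammaMat: "Tinvm q \<in> GammaMat q"
  using GammaMat.gm_Tinv[OF GammaMat.gm_id] by simp

lemma Sm_GammaMat: "Sm \<in> GammaMat q"
  using GammaMat.gm_S[OF GammaMat.gm_id] by simp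

lemma Sm_squared: "mmul Sm Sm = mneg mid"
  by (simp add: mmul_def Sm_def mneg_def mid_def)

lemma mneg_GammaMat: "M \<in> GammaMat q \<Longrightarrow> mneg M \<in> GammaMat q"
  using GammaMat_mmul[OF GammaMat_mmul[OF Sm_GammaMat Sm_GammaMat]] by (simp add: Sm_squared)

lemma mdet_GammaMat: "M \<in> GammaMat q \<Longrightarrow> mdet M = 1"
  by (induction rule: GammaMat.induct)
     (simp_all add: mdet_mmul, simp_all add: mdet_def mid_def Tm_def Tinvm_def Sm_def)

lemma madj_GammaMat: "M \<in> GammaMat q \<Longrightarrow> madj M \<in> GammaMat q"
proof (induction rule: GammaMat.induct)
  case gm_id
  show ?case using GammaMat.gm_id by (simp add: madj_def mid_def)
next
  case (gm_T M)
  have "madj (Tm q) = Tinvm q" by (simp add: madj_def Tm_def Tinvm_def)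
  thus ?case using gm_T GammaMat_mmul Tinvm_GammaMat madj_mmul by metis
next
  case (gm_Tinv M)
  have "madj (Tinvm q) = Tm q" by (simp add: madj_def Tm_def Tinvm_def)
  thus ?case using gm_Tinv GammaMat_mmul Tm_GammaMat madj_mmul by metis
next
  case (gm_S M)
  have "madj Sm = mneg Sm" by (simp add: madj_def Sm_def mneg_def)
  thus ?case using gm_S GammaMat_mmul mneg_GammaMat[OF Sm_GammaMat] madj_mmul by metis
qed

definition qconj :: "mat2 \<Rightarrow> mat2" where
  "qconj M = mmul Qm (mmul M Qm)"

lemma qconj_mmul: "qconj (mmul A B) = mmul (qconj A) (qconj B)"
proof -
  have "mmul Qm Qm = mid" by (simp add: mmul_def Qm_def mid_def)
  thus ?thesis by (simp add: qconj_def mmul_assoc flip: mmul_assoc[of Qm Qm])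
qed

lemma qconj_GammaMat: "M \<in> GammaMat q \<Longrightarrow> qconj M \<in> GammaMat q"
proof (induction rule: GammaMat.induct)
  case gm_id
  show ?case using GammaMat.gm_id by (simp add: qconj_def mmul_def Qm_def mid_def)
next
  case (gm_T M)
  have "qconj (Tm q) = mmul Sm (mmul (Tinvm q) (mneg Sm))"
    by (simp add: qconj_def mmul_def Qm_def Tm_def Tinvm_def Sm_def mneg_def)
  hence "qconj (Tm q) \<in> GammaMat q"
    using GammaMat_mmul Sm_GammaMat Tinvm_GammaMat mneg_GammaMat by metis
  thus ?case using gm_T qconj_mmul GammaMat_mmul by metis
next
  case (gm_Tinv M)
  have "qconj (Tinvm q) = mmul Sm (mmul (Tm q) (mneg Sm))"
    by (simp add: qconj_def mmul_def Qm_def Tm_def Tinvm_def Sm_def mneg_def)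
  hence "qconj (Tinvm q) \<in> GammaMat q"
    using GammaMat_mmul Sm_GammaMat Tm_GammaMat mneg_GammaMat by metis
  thus ?case using gm_Tinv qconj_mmul GammaMat_mmul by metis
next
  case (gm_S M)
  have "qconj Sm = mneg Sm" by (simp add: qconj_def mmul_def Qm_def Sm_def mneg_def)
  thus ?case using gm_S qconj_mmul GammaMat_mmul mneg_GammaMat[OF Sm_GammaMat] by metis
qed

lemma Zlam_zero: "0 \<in> Zlam q"
  using Zlam.zl_diff[OF Zlam.zl_one Zlam.zl_one] by simp

lemma Zlam_uminus: "x \<in> Zlam q \<Longrightarrow> - x \<in> Zlam q"
  using Zlam.zl_diff[OF Zlam_zero] by fastforce

lemma Zlam_add: "x \<in> Zlam q \<Longrightarrow> y \<in> Zlam q \<Longrightarrow> x + y \<in> Zlam q"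
  using Zlam.zl_diff[OF _ Zlam_uminus] by fastforce

lemma Zlam_lincomb:
  "a \<in> Zlam q \<Longrightarrow> b \<in> Zlam q \<Longrightarrow> x \<in> Zlam q \<Longrightarrow> y \<in> Zlam q \<Longrightarrow> a*x + b*y \<in> Zlam q"
  using Zlam_add Zlam.zl_mult by blast

lemma reduced_frac_swap:
  assumes "reduced_frac q a c"
  shows "reduced_frac q c a"
proof -
  obtain b d where G: "(a,b,c,d) \<in> GammaMat q" "a \<in> Zlam q" "c \<in> Zlam q"
    using assms unfolding reduced_frac_def by blast
  have "mmul (qconj (a,b,c,d)) (mneg Sm) = (c, -d, a, -b)"
    by (simp add: qconj_def mmul_def Qm_def Sm_def mneg_def)
  moreover have "mmul (qconj (a,b,c,d)) (mneg Sm) \<in> GammaMat q"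
    using GammaMat_mmul[OF qconj_GammaMat[OF G(1)] mneg_GammaMat[OF Sm_GammaMat]] .
  ultimately show ?thesis using G unfolding reduced_frac_def by metis
qed

lemma reduced_frac_mapply:
  assumes "(e,f,g,h) \<in> GammaMat q" "e \<in> Zlam q" "f \<in> Zlam q" "g \<in> Zlam q" "h \<in> Zlam q"
    and "reduced_frac q a c"
  shows "reduced_frac q (e*a + f*c) (g*a + h*c)"
proof -
  obtain b d where A: "(a,b,c,d) \<in> GammaMat q" "a \<in> Zlam q" "c \<in> Zlam q"
    using assms(6) unfolding reduced_frac_def by blast
  have "mmul (e,f,g,h) (a,b,c,d) = (e*a + f*c, e*b + f*d, g*a + h*c, g*b + h*d)"
    by (simp add: mmul_def)
  moreover have "mmul (e,f,g,h) (a,b,c,d) \<in> GammaMat q"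
    using GammaMat_mmul assms(1) A(1) by blast
  ultimately show ?thesis
    unfolding reduced_frac_def using Zlam_lincomb assms(2-5) A(2,3) by metis
qed

section \<open>The sequence \<open>s\<close> and normal forms in the Hecke group\<close>

locale hecke =
  fixes q :: nat
  assumes q_ge_3: "3 \<le> q"
begin

definition sn :: "nat \<Rightarrow> real" where
  "sn m = sq q (real m)"

lemma sin_pi_div_q_pos: "0 < sin (pi / real q)"
  using q_ge_3 by (intro sin_gt_zero) (simp_all add: divide_less_eq)

lemma sn_pos: "0 < m \<Longrightarrow> m < q \<Longrightarrow> 0 < sn m"
proof -
  assume m: "0 < m" "m < q"
  hence "0 < sin (real m * pi / real q)"
    by (intro sin_gt_zero) (simp_all add: divide_less_eq)
  thus ?thesis unfolding sn_def sq_def using sin_pi_div_q_pos by simp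
qed

lemma sn_0 [simp]: "sn 0 = 0"
  by (simp add: sn_def sq_def)

lemma sn_1 [simp]: "sn (Suc 0) = 1"
  using sin_pi_div_q_pos by (simp add: sn_def sq_def)

lemma sn_q [simp]: "sn q = 0"
  using q_ge_3 by (simp add: sn_def sq_def)

lemma sn_nonneg: "m \<le> q \<Longrightarrow> 0 \<le> sn m"
  using sn_pos[of m] by (cases "m = 0 \<or> m = q") auto

lemma sn_rec: "sn (m + 2) = lam q * sn (m + 1) - sn m"
proof -
  define t where "t = pi / real q"
  have args: "real (m + 2) * pi / real q = real (m + 1) * t + t"
             "real m * pi / real q = real (m + 1) * t - t"
             "real (m + 1) * pi / real q = real (m + 1) * t"
    using q_ge_3 by (simp_all add: t_def field_simps)
  show ?thesis
    unfolding sn_def sq_def lam_def t_def[symmetric]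
    apply (simp only: args sin_add sin_diff)
    using sin_pi_div_q_pos by (simp add: t_def field_simps)
qed

lemma sn_2 [simp]: "sn (Suc (Suc 0)) = lam q"
  using sn_rec[of 0] by (simp add: numeral_2_eq_2)

lemma sn_reflect: "m \<le> q \<Longrightarrow> sn (q - m) = sn m"
proof -
  assume "m \<le> q"
  hence "real (q - m) * pi / real q = pi - real m * pi / real q"
    using q_ge_3 by (simp add: field_simps)
  thus ?thesis unfolding sn_def sq_def by simp
qed

lemma sn_q_minus_1 [simp]: "sn (q - Suc 0) = 1"
  using sn_reflect[of 1] q_ge_3 by simp

lemma sn_q_minus_2: "sn (q - 2) = lam q"
  using sn_reflect[of 2] q_ge_3 by (simp add: numeral_2_eq_2)

lemma sn_Suc_q [simp]: "sn (Suc q) = -1"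
  using sn_rec[of "q - 1"] q_ge_3 by (simp add: numeral_2_eq_2)

lemma sn_det: "1 \<le> k \<Longrightarrow> sn k ^ 2 - sn (k + 1) * sn (k - 1) = 1"
proof -
  assume "1 \<le> k"
  define t a where "t = pi / real q" and "a = real k * pi / real q"
  have args: "real (k + 1) * pi / real q = a + t" "real (k - 1) * pi / real q = a - t"
    using \<open>1 \<le> k\<close> q_ge_3 by (simp_all add: a_def t_def field_simps)
  have "(sin a)^2 - sin (a + t) * sin (a - t) = (sin t)^2"
    unfolding sin_add sin_diff using sin_cos_squared_add[of a] sin_cos_squared_add[of t]
    by algebra
  thus ?thesis
    unfolding sn_def sq_def args a_def[symmetric] t_def[symmetric] using sin_pi_div_q_pos
    by (simp add: t_def field_simps power2_eq_square)
qed

lemma sn_Zlam: "sn m \<in> Zlam q"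
proof (induction m rule: nat_less_induct)
  case (1 m)
  consider "m = 0" | "m = 1" | m' where "m = m' + 2"
    by (metis One_nat_def add_2_eq_Suc' not0_implies_Suc)
  thus ?case
  proof cases
    case 3
    thus ?thesis using 1 sn_rec[of m'] by (simp add: Zlam.zl_diff Zlam.zl_mult Zlam.zl_lam)
  qed (simp_all add: Zlam_zero Zlam.zl_one)
qed

text \<open>\<open>Vpow j\<close> is the \<open>j\<close>-th power of \<open>V = T S\<^sup>-\<^sup>1\<close>.\<close>
definition Vpow :: "nat \<Rightarrow> mat2" where
  "Vpow j = (sn (j + 1), - sn j, sn j, - sn (j - 1))"

lemma Vpow_1: "Vpow 1 = mmul (Tm q) (mneg Sm)"
  by (simp add: Vpow_def mmul_def Tm_def Sm_def mneg_def)

lemma Vpow_Suc: "1 \<le> j \<Longrightarrow> mmul (Vpow 1) (Vpow j) = Vpow (Suc j)"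
proof -
  assume "1 \<le> j"
  have r: "sn (Suc (Suc j)) = lam q * sn (Suc j) - sn j"
    using sn_rec[of j] by simp
  have r': "sn (Suc j) = lam q * sn j - sn (j - 1)"
    using sn_rec[of "j - 1"] \<open>1 \<le> j\<close> by simp
  show ?thesis by (simp add: Vpow_def mmul_def r r' algebra_simps)
qed

lemma Vpow_q: "Vpow q = mneg mid"
  by (simp add: Vpow_def mneg_def mid_def)

lemma Vpow_1_Sm: "mmul (Vpow 1) Sm = Tm q"
  by (simp add: Vpow_def mmul_def Sm_def Tm_def)

lemma Sm_Vpow_q_minus_1: "mmul Sm (Vpow (q - 1)) = Tinvm q"
proof -
  have "q - 1 - 1 = q - 2" "q - 1 + 1 = q" using q_ge_3 by auto
  thus ?thesis by (simp add: Vpow_def mmul_def Sm_def Tinvm_def sn_q_minus_2)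
qed

lemma Vpow_1_GammaMat: "Vpow 1 \<in> GammaMat q"
  unfolding Vpow_1 by (intro GammaMat_mmul Tm_GammaMat mneg_GammaMat Sm_GammaMat)

lemma Vpow_GammaMat: "1 \<le> j \<Longrightarrow> Vpow j \<in> GammaMat q"
proof (induction j rule: nat_induct_at_least)
  case base
  show ?case by (rule Vpow_1_GammaMat)
next
  case (Suc j)
  thus ?case using GammaMat_mmul[OF Vpow_1_GammaMat] Vpow_Suc by metis
qed

definition letter :: "nat \<Rightarrow> mat2" where
  "letter a = (if a = 0 then Sm else Vpow a)"

definition word_mat :: "nat list \<Rightarrow> mat2" where
  "word_mat w = foldr (\<lambda>a M. mmul (letter a) M) w mid"

lemma word_mat_simps [simp]:
  "word_mat [] = mid" "word_mat (a # w) = mmul (letter a) (word_mat w)"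
  by (simp_all add: word_mat_def)

text \<open>Reduced words of the free product \<open>\<langle>S\<rangle> * \<langle>V\<rangle>\<close>: the letter \<open>0\<close> codes \<open>S\<close>, a letter
  \<open>0 < j < q\<close> codes \<open>V\<^sup>j\<close>.\<close>
fun alternating :: "nat list \<Rightarrow> bool" where
  "alternating [] = True"
| "alternating [a] = (a < q)"
| "alternating (a # b # w) = (a < q \<and> (a = 0 \<longleftrightarrow> b \<noteq> 0) \<and> alternating (b # w))"

lemma alternating_tl: "alternating (a # w) \<Longrightarrow> alternating w"
  by (cases w) auto

definition normal_form :: "mat2 \<Rightarrow> bool" where
  "normal_form G \<longleftrightarrow> (\<exists>w. alternating w \<and> (G = word_mat w \<or> G = mneg (word_mat w)))"

lemma normal_form_mneg: "normal_form G \<Longrightarrow> normal_form (mneg G)"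
  unfolding normal_form_def by auto

lemma normal_form_Sm_word: "alternating w \<Longrightarrow> normal_form (mmul Sm (word_mat w))"
proof (cases w)
  case Nil
  thus ?thesis using q_ge_3 unfolding normal_form_def
    by (intro exI[of _ "[0]"]) (simp add: letter_def)
next
  case (Cons a t)
  assume alt: "alternating w"
  show ?thesis
  proof (cases "a = 0")
    case True
    hence "mmul Sm (word_mat w) = mneg (word_mat t)"
      using Cons by (simp add: letter_def Sm_squared flip: mmul_assoc)
    thus ?thesis using alternating_tl alt Cons unfolding normal_form_def by blast
  next
    case False
    hence "alternating (0 # w)" using alt Cons q_ge_3 by simp
    thus ?thesis unfolding normal_form_def by (intro exI[of _ "0 # w"]) (simp add: letter_def)
  qed
qed

lemma normal_form_Vpow_1_word: "alternating w \<Longrightarrow> normal_form (mmul (Vpow 1) (word_mat w))"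
proof (cases w)
  case Nil
  thus ?thesis using q_ge_3 unfolding normal_form_def
    by (intro exI[of _ "[1]"]) (simp add: letter_def)
next
  case (Cons a t)
  assume alt: "alternating w"
  show ?thesis
  proof (cases "a = 0")
    case True
    hence "alternating (1 # w)" using alt Cons q_ge_3 by (cases t) auto
    thus ?thesis unfolding normal_form_def by (intro exI[of _ "1 # w"]) (simp add: letter_def)
  next
    case False
    have merge: "mmul (Vpow 1) (word_mat w) = mmul (Vpow (Suc a)) (word_mat t)"
      using False Cons Vpow_Suc[of a] by (simp add: letter_def flip: mmul_assoc)
    have "a < q" using alt Cons by (cases t) auto
    show ?thesis
    proof (cases "Suc a = q")
      case True
      thus ?thesis using merge Vpow_q alternating_tl alt Cons unfolding normal_form_def by auto
    next
      case False
      hence "alternating (Suc a # t)" using alt Cons \<open>a < q\<close> \<open>a \<noteq> 0\<close> by (cases t) auto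
      thus ?thesis unfolding normal_form_def using merge
        by (intro exI[of _ "Suc a # t"]) (simp add: letter_def)
    qed
  qed
qed

lemma normal_form_Sm_mmul: "normal_form G \<Longrightarrow> normal_form (mmul Sm G)"
  unfolding normal_form_def[of G] using normal_form_Sm_word normal_form_mneg
  by (metis mmul_mneg(2))

lemma normal_form_Vpow_1_mmul: "normal_form G \<Longrightarrow> normal_form (mmul (Vpow 1) G)"
  unfolding normal_form_def[of G] using normal_form_Vpow_1_word normal_form_mneg
  by (metis mmul_mneg(2))

lemma normal_form_Vpow_mmul: "1 \<le> j \<Longrightarrow> normal_form G \<Longrightarrow> normal_form (mmul (Vpow j) G)"
proof (induction j rule: nat_induct_at_least)
  case base
  thus ?case by (rule normal_form_Vpow_1_mmul)
next
  case (Suc j)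
  have "mmul (Vpow (Suc j)) G = mmul (Vpow 1) (mmul (Vpow j) G)"
    using Vpow_Suc[OF Suc(1)] by (simp flip: mmul_assoc)
  thus ?case using Suc normal_form_Vpow_1_mmul by simp
qed

lemma GammaMat_normal_form: "G \<in> GammaMat q \<Longrightarrow> normal_form G"
proof (induction G rule: GammaMat.induct)
  case gm_id
  show ?case unfolding normal_form_def by (intro exI[of _ "[]"]) simp
next
  case (gm_T M)
  have "mmul (Tm q) M = mmul (Vpow 1) (mmul Sm M)"
    by (simp add: Vpow_1_Sm[symmetric] mmul_assoc)
  thus ?case using normal_form_Vpow_mmul normal_form_Sm_mmul gm_T by simp
next
  case (gm_Tinv M)
  have "mmul (Tinvm q) M = mmul Sm (mmul (Vpow (q - 1)) M)"
    by (simp add: Sm_Vpow_q_minus_1[symmetric] mmul_assoc)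
  thus ?case using normal_form_Sm_mmul normal_form_Vpow_mmul[of "q - 1"] gm_Tinv q_ge_3 by simp
next
  case (gm_S M)
  thus ?case using normal_form_Sm_mmul by simp
qed

definition axes :: "(real \<times> real) set" where
  "axes = {(1,0), (-1,0), (0,1), (0,-1)}"

lemma Vpow_axes:
  assumes "1 \<le> a" "a < q" "p \<in> axes"
  shows "mapply (Vpow a) p \<in> axes \<or> 0 < fst (mapply (Vpow a) p) * snd (mapply (Vpow a) p)"
proof -
  have pos: "0 < sn a" "Suc a \<noteq> q \<Longrightarrow> 0 < sn (Suc a)" "a \<noteq> 1 \<Longrightarrow> 0 < sn (a - 1)"
    using sn_pos assms(1,2) by simp_all
  have "Suc a = q \<Longrightarrow> sn a = 1"
    using sn_q_minus_1 by (metis diff_Suc_Suc diff_zero)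
  hence ends: "Suc a = q \<Longrightarrow> sn a = 1" "a = 1 \<Longrightarrow> sn (a - 1) = 0"
    by simp_all
  show ?thesis
    using assms(3) pos ends
    by (cases "Suc a = q"; cases "a = 1")
       (auto simp: axes_def mapply_def Vpow_def)
qed

lemma Vpow_opposite_signs:
  assumes "1 \<le> a" "a < q" "x * y < 0"
  shows "0 < fst (mapply (Vpow a) (x,y)) * snd (mapply (Vpow a) (x,y))"
proof -
  have sn_a: "0 < sn a" "0 \<le> sn (a + 1)" "0 \<le> sn (a - 1)"
    using sn_pos sn_nonneg assms(1,2) by simp_all
  have "(0 < x \<and> y < 0) \<or> (x < 0 \<and> 0 < y)"
    using assms(3) by (auto simp: mult_less_0_iff)
  hence "(0 < sn (a + 1) * x - sn a * y \<and> 0 < sn a * x - sn (a - 1) * y) \<or>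
         (sn (a + 1) * x - sn a * y < 0 \<and> sn a * x - sn (a - 1) * y < 0)"
    using sn_a by (smt (verit) mult_nonneg_nonneg mult_nonneg_nonpos mult_pos_neg mult_pos_pos)
  thus ?thesis by (auto simp: mapply_def Vpow_def mult_neg_neg)
qed

text \<open>Ping-pong: \<open>S\<close> swaps the open quadrants \<open>xy > 0\<close> and \<open>xy < 0\<close>, while each \<open>V\<^sup>j\<close>
  maps \<open>xy < 0\<close> into \<open>xy > 0\<close>.\<close>
lemma alternating_first_column:
  assumes "alternating w"
  defines "p \<equiv> mapply (word_mat w) (1,0)"
  shows "p \<in> axes \<or> (0 < fst p * snd p \<and> w \<noteq> [] \<and> hd w \<noteq> 0)
                    \<or> (fst p * snd p < 0 \<and> w \<noteq> [] \<and> hd w = 0)"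
  using assms(1) unfolding p_def
proof (induction w)
  case Nil
  show ?case by (simp add: axes_def)
next
  case (Cons a t)
  obtain x y where xy: "mapply (word_mat t) (1,0) = (x,y)" by fastforce
  have IH: "(x,y) \<in> axes \<or> (0 < x * y \<and> t \<noteq> [] \<and> hd t \<noteq> 0) \<or> (x * y < 0 \<and> t \<noteq> [] \<and> hd t = 0)"
    using Cons alternating_tl xy by fastforce
  have col: "mapply (word_mat (a # t)) (1,0) = mapply (letter a) (x,y)"
    using xy by (simp add: mapply_mmul)
  show ?case
  proof (cases "a = 0")
    case True
    have "t = [] \<or> hd t \<noteq> 0" using Cons.prems True by (cases t) auto
    hence "(x,y) \<in> axes \<or> 0 < x * y" using IH by auto
    moreover have "mapply (letter a) (x,y) = (y, -x)"
      using True by (simp add: letter_def mapply_def Sm_def)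
    ultimately show ?thesis
      using col True by (auto simp: axes_def mult.commute)
  next
    case False
    have "a < q" using Cons.prems by (cases t) auto
    have "t = [] \<or> hd t = 0" using Cons.prems False by (cases t) auto
    hence "(x,y) \<in> axes \<or> x * y < 0" using IH by auto
    thus ?thesis
      using Vpow_axes[of a "(x,y)"] Vpow_opposite_signs[of a x y] col False \<open>a < q\<close>
      by (auto simp: letter_def)
  qed
qed

text \<open>The stabiliser of \<open>\<infinity>\<close> in \<open>\<Gamma>\<^sub>q\<close> is \<open>\<plusminus>\<langle>T\<rangle>\<close>; we only need its diagonal entries.\<close>
lemma GammaMat_lower_left_0: "(a,b,0,d) \<in> GammaMat q \<Longrightarrow> a = 1 \<or> a = -1"
proof -
  assume "(a,b,0,d) \<in> GammaMat q"
  then obtain w where w: "alternating w" "(a,b,0,d) = word_mat w \<or> (a,b,0,d) = mneg (word_mat w)"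
    using GammaMat_normal_form unfolding normal_form_def by blast
  obtain x y where xy: "mapply (word_mat w) (1,0) = (x,y)" by fastforce
  have "mapply (a,b,0,d) (1,0) = (a,0)" by (simp add: mapply_def)
  hence "(a = x \<or> a = -x) \<and> y = 0"
    using w(2) xy mapply_mneg[of "word_mat w" "(1,0)"] by auto
  thus ?thesis
    using alternating_first_column[OF w(1)] xy by (auto simp: axes_def)
qed

lemma reduced_frac_unique:
  assumes "reduced_frac q v w" "reduced_frac q r s" "v * s = w * r"
  shows "(r = v \<and> s = w) \<or> (r = -v \<and> s = -w)"
proof -
  obtain b d b' d' where G: "(v,b,w,d) \<in> GammaMat q" "(r,b',s,d') \<in> GammaMat q"
    using assms(1,2) unfolding reduced_frac_def by blast
  have "mmul (madj (v,b,w,d)) (r,b',s,d') = (d*r - b*s, d*b' - b*d', 0, v*d' - w*b')"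
    using assms(3) by (simp add: madj_def mmul_def algebra_simps)
  moreover have "mmul (madj (v,b,w,d)) (r,b',s,d') \<in> GammaMat q"
    using GammaMat_mmul madj_GammaMat G by blast
  ultimately have u: "d*r - b*s = 1 \<or> d*r - b*s = -1"
    using GammaMat_lower_left_0 by metis
  have "v*d - b*w = 1" using mdet_GammaMat[OF G(1)] by (simp add: mdet_def)
  hence "r = v * (d*r - b*s)" "s = w * (d*r - b*s)"
    using assms(3) by algebra+
  thus ?thesis using u by auto
qed

end

section \<open>The inverse branches of the Farey map\<close>

locale odd_hecke = hecke +
  assumes odd_q: "odd q"
begin

definition qhalf :: nat where
  "qhalf = (q - 1) div 2"

lemma q_eq: "q = 2 * qhalf + 1" and qhalf_pos: "1 \<le> qhalf"
  using odd_q q_ge_3 unfolding qhalf_def by (auto elim!: oddE)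

lemma Kset_eq: "Kset q = {Suc qhalf .. q - 1}"
proof -
  have "(q + 1) div 2 = Suc qhalf" using q_eq by simp
  thus ?thesis unfolding Kset_def by simp
qed

lemma Kset_D:
  assumes "k \<in> Kset q"
  shows "2 \<le> k" "k < q" "0 < sn k" "0 < sn (k - 1)" "0 \<le> sn (k + 1)"
    and "sn k ^ 2 - sn (k + 1) * sn (k - 1) = 1"
proof -
  show "2 \<le> k" "k < q" using assms qhalf_pos q_eq Kset_eq by auto
  thus "0 < sn k" "0 < sn (k - 1)" "0 \<le> sn (k + 1)" "sn k ^ 2 - sn (k + 1) * sn (k - 1) = 1"
    using sn_pos[of k] sn_pos[of "k - 1"] sn_nonneg[of "k + 1"] sn_det[of k] by auto
qed

text \<open>\<open>farey_mat False k = g\<^sub>k\<close> and \<open>farey_mat True k = Q g\<^sub>k\<close> act on the two branches of \<open>F\<^sub>q\<close>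
  belonging to \<open>k\<close>; \<open>branch_mat t k\<close> are their inverses, the elements of \<open>\<Lambda>\<^sub>q\<close>.\<close>
definition farey_mat :: "bool \<Rightarrow> nat \<Rightarrow> mat2" where
  "farey_mat t k = (if t then mmul Qm (gk q k) else gk q k)"

definition branch_mat :: "bool \<Rightarrow> nat \<Rightarrow> mat2" where
  "branch_mat t k = (if t then (sn (k + 1), sn k, sn k, sn (k - 1))
                     else (sn k, sn (k + 1), sn (k - 1), sn k))"

definition inv_branch :: "bool \<Rightarrow> nat \<Rightarrow> real \<Rightarrow> real" where
  "inv_branch t k = mob (branch_mat t k)"

lemma farey_mat_eq:
  "1 \<le> k \<Longrightarrow> farey_mat t k = (if t then (- sn (k - 1), sn k, sn k, - sn (k + 1))
                                  else (sn k, - sn (k + 1), - sn (k - 1), sn k))"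
  unfolding farey_mat_def gk_def sn_def using of_nat_diff[of 1 k]
  by (simp add: mmul_def Qm_def add.commute)

lemma branch_mat_farey_mat:
  assumes "k \<in> Kset q"
  shows "mmul (branch_mat t k) (farey_mat t k) = mid"
proof -
  have "sn k * sn k - sn (k + 1) * sn (k - 1) = 1"
    using Kset_D[OF assms] by (simp add: power2_eq_square)
  thus ?thesis
    using Kset_D(1)[OF assms]
    by (simp add: farey_mat_eq branch_mat_def mmul_def mid_def algebra_simps)
qed

lemma minv_farey_mat:
  assumes "k \<in> Kset q"
  shows "minv (farey_mat t k) = branch_mat t k"
proof -
  have "mdet (farey_mat t k) = (if t then -1 else 1)"
    using Kset_D[OF assms]
    by (simp add: farey_mat_eq mdet_def power2_eq_square algebra_simps)
  thus ?thesis using Kset_D(1)[OF assms]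
    by (simp add: minv_def farey_mat_eq branch_mat_def)
qed

lemma LamSet_eq: "LamSet q = {branch_mat t k | t k. k \<in> Kset q}"
proof -
  have "LamSet q = (\<Union>t. (\<lambda>k. minv (farey_mat t k)) ` Kset q)"
    unfolding LamSet_def farey_mat_def UNIV_bool by auto
  also have "\<dots> = (\<Union>t. branch_mat t ` Kset q)"
    by (simp add: minv_farey_mat cong: image_cong)
  finally show ?thesis by blast
qed

lemma mdet_branch_mat: "k \<in> Kset q \<Longrightarrow> mdet (branch_mat t k) = (if t then -1 else 1)"
  using Kset_D[of k] by (simp add: branch_mat_def mdet_def power2_eq_square algebra_simps)

lemma branch_mat_den_pos: "k \<in> Kset q \<Longrightarrow> 0 \<le> y \<Longrightarrow> 0 < snd (mapply (branch_mat t k) (y,1))"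
  using Kset_D[of k]
  by (simp add: branch_mat_def mapply_def add_pos_nonneg add_nonneg_pos)

lemma inv_branch_strict_mono:
  "k \<in> Kset q \<Longrightarrow> 0 \<le> y1 \<Longrightarrow> y1 < y2 \<Longrightarrow> inv_branch False k y1 < inv_branch False k y2"
  unfolding inv_branch_def
  by (rule mob_strict_mono) (simp_all add: mdet_branch_mat branch_mat_den_pos)

lemma inv_branch_strict_anti:
  "k \<in> Kset q \<Longrightarrow> 0 \<le> y1 \<Longrightarrow> y1 < y2 \<Longrightarrow> inv_branch True k y2 < inv_branch True k y1"
  unfolding inv_branch_def
  by (rule mob_strict_anti) (simp_all add: mdet_branch_mat branch_mat_den_pos)

lemma inv_branch_inj:
  "k \<in> Kset q \<Longrightarrow> 0 \<le> y1 \<Longrightarrow> 0 \<le> y2 \<Longrightarrow> inv_branch t k y1 = inv_branch t k y2 \<Longrightarrow> y1 = y2"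
  using inv_branch_strict_mono[of k y1 y2] inv_branch_strict_mono[of k y2 y1]
    inv_branch_strict_anti[of k y1 y2] inv_branch_strict_anti[of k y2 y1]
  by (cases t; cases y1 y2 rule: linorder_cases) auto

definition ratio :: "nat \<Rightarrow> real" where
  "ratio j = sn (j + 1) / sn j"

definition mediant :: "nat \<Rightarrow> real" where
  "mediant k = (sn k + sn (k + 1)) / (sn (k - 1) + sn k)"

definition branch_dom :: "bool \<Rightarrow> nat \<Rightarrow> real set" where
  "branch_dom t k = (if t then {mediant k .. ratio (k - 1)} else {ratio k .. mediant k})"

lemma ratio_less_mediant_less: "k \<in> Kset q \<Longrightarrow> ratio k < mediant k \<and> mediant k < ratio (k - 1)"
proof -
  assume k: "k \<in> Kset q"
  note K = Kset_D[OF k]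
  have "sn (k + 1) * sn (k - 1) < sn k * sn k" using K by (simp add: power2_eq_square)
  hence "sn (k + 1) * (sn (k - 1) + sn k) < sn k * (sn k + sn (k + 1))"
        "sn (k - 1) * (sn k + sn (k + 1)) < sn k * (sn (k - 1) + sn k)"
    by (simp_all add: algebra_simps)
  moreover have "k - 1 + 1 = k" using K by simp
  ultimately show ?thesis unfolding ratio_def mediant_def using K
    by (simp add: divide_less_eq less_divide_eq mult.commute add_pos_pos)
qed

lemma ratio_decreasing: "qhalf \<le> j \<Longrightarrow> j + 1 < q \<Longrightarrow> ratio (j + 1) < ratio j"
proof -
  assume j: "qhalf \<le> j" "j + 1 < q"
  have pos: "0 < sn j" "0 < sn (j + 1)" using sn_pos j qhalf_pos by auto
  have "sn (j + 2) * sn j < sn (j + 1) * sn (j + 1)"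
    using sn_det[of "j + 1"] by (simp add: power2_eq_square)
  thus ?thesis unfolding ratio_def using pos by (simp add: divide_less_eq field_simps)
qed

lemma ratio_antimono: "j \<le> j' \<Longrightarrow> qhalf \<le> j \<Longrightarrow> j' < q \<Longrightarrow> ratio j' \<le> ratio j"
proof (induction rule: dec_induct)
  case (step j')
  thus ?case using ratio_decreasing[of j'] by fastforce
qed simp

lemma ratio_qhalf: "ratio qhalf = 1"
proof -
  have "q - qhalf = qhalf + 1" using q_eq by simp
  hence "sn (qhalf + 1) = sn (q - qhalf)" by simp
  also have "\<dots> = sn qhalf" using sn_reflect q_eq by simp
  finally show ?thesis unfolding ratio_def using sn_pos[of qhalf] q_eq qhalf_pos by simp
qed

lemma ratio_q_minus_1: "ratio (q - 1) = 0"
  unfolding ratio_def using q_ge_3 by simp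

lemma Kset_ratio_bounds: "k \<in> Kset q \<Longrightarrow> 0 \<le> ratio k \<and> ratio (k - 1) \<le> 1"
  using ratio_antimono[of k "q - 1"] ratio_antimono[of qhalf "k - 1"]
    ratio_q_minus_1 ratio_qhalf Kset_eq q_eq by auto

lemma inv_branch_0: "k \<in> Kset q \<Longrightarrow> inv_branch t k 0 = (if t then ratio (k - 1) else ratio k)"
  using Kset_D[of k] by (simp add: inv_branch_def branch_mat_def mob_def ratio_def)

lemma inv_branch_1: "k \<in> Kset q \<Longrightarrow> inv_branch t k 1 = mediant k"
  using Kset_D[of k] by (simp add: inv_branch_def branch_mat_def mob_def mediant_def add.commute)

lemma inv_branch_range:
  assumes "k \<in> Kset q" "0 \<le> y" "y \<le> 1"
  shows "inv_branch t k y \<in> branch_dom t k"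
    and "inv_branch t k y = inv_branch t k 0 \<longleftrightarrow> y = 0"
    and "inv_branch t k y = mediant k \<longleftrightarrow> y = 1"
proof -
  have "y = 0 \<or> 0 < y" "y = 1 \<or> y < 1" using assms by auto
  thus "inv_branch t k y \<in> branch_dom t k"
    "inv_branch t k y = inv_branch t k 0 \<longleftrightarrow> y = 0" "inv_branch t k y = mediant k \<longleftrightarrow> y = 1"
    using inv_branch_strict_mono[OF assms(1), of 0 y] inv_branch_strict_mono[OF assms(1,2), of 1]
      inv_branch_strict_anti[OF assms(1), of 0 y] inv_branch_strict_anti[OF assms(1,2), of 1]
      inv_branch_0[OF assms(1)] inv_branch_1[OF assms(1)] ratio_less_mediant_less[OF assms(1)]
    by (cases t; auto simp: branch_dom_def)+
qed

lemma inv_branch_open_unit: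
  assumes "k \<in> Kset q" "0 < y" "y \<le> 1"
  shows "0 < inv_branch t k y \<and> inv_branch t k y < 1"
  using inv_branch_range[of k y t] assms Kset_ratio_bounds[OF assms(1)]
    ratio_less_mediant_less[OF assms(1)] inv_branch_0[OF assms(1)]
  by (cases t) (auto simp: branch_dom_def)

lemma branch_dom_bounds: "k \<in> Kset q \<Longrightarrow> x \<in> branch_dom t k \<Longrightarrow> ratio k \<le> x \<and> x \<le> ratio (k - 1)"
  using ratio_less_mediant_less[of k] by (auto simp: branch_dom_def split: if_splits)

lemma inv_branch_eq_less:
  assumes k: "k1 \<in> Kset q" "k2 \<in> Kset q" "k1 < k2" and y: "y1 \<in> {0..1}" "y2 \<in> {0..1}"
    and eq: "inv_branch t1 k1 y1 = inv_branch t2 k2 y2"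
  shows "y1 = 0 \<and> y2 = 0"
proof -
  let ?x = "inv_branch t1 k1 y1"
  have dom: "?x \<in> branch_dom t1 k1" "?x \<in> branch_dom t2 k2"
    using inv_branch_range(1)[of k1 y1 t1] inv_branch_range(1)[of k2 y2 t2] k y eq by auto
  have "ratio (k2 - 1) \<le> ratio k1"
    using ratio_antimono[of k1 "k2 - 1"] k Kset_eq by auto
  hence x: "?x = ratio k1" "?x = ratio (k2 - 1)"
    using branch_dom_bounds[OF k(1) dom(1)] branch_dom_bounds[OF k(2) dom(2)] by linarith+
  have "\<not> t1"
    using dom(1) x(1) ratio_less_mediant_less[OF k(1)] by (cases t1) (auto simp: branch_dom_def)
  moreover have "t2"
    using dom(2) x(2) ratio_less_mediant_less[OF k(2)] by (cases t2) (auto simp: branch_dom_def)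
  ultimately have "inv_branch t1 k1 y1 = inv_branch t1 k1 0" "inv_branch t2 k2 y2 = inv_branch t2 k2 0"
    using inv_branch_0[OF k(1)] inv_branch_0[OF k(2)] x eq by simp_all
  thus ?thesis
    using inv_branch_range(2)[OF k(1), of y1 t1] inv_branch_range(2)[OF k(2), of y2 t2] y by simp
qed

lemma inv_branch_eq_cases:
  assumes k: "k1 \<in> Kset q" "k2 \<in> Kset q" and y: "y1 \<in> {0..1}" "y2 \<in> {0..1}"
    and eq: "inv_branch t1 k1 y1 = inv_branch t2 k2 y2"
  shows "y1 = y2 \<and> ((k1 = k2 \<and> t1 = t2) \<or> y1 = 0 \<or> (y1 = 1 \<and> k1 = k2))"
proof (cases k1 k2 rule: linorder_cases)
  case less
  thus ?thesis using inv_branch_eq_less k y eq by blast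
next
  case greater
  thus ?thesis using inv_branch_eq_less[of k2 k1 y2 y1 t2 t1] k y eq by auto
next
  case equal
  show ?thesis
  proof (cases "t1 = t2")
    case True
    thus ?thesis using inv_branch_inj[of k1 y1 y2 t1] k y eq equal by auto
  next
    case False
    hence "inv_branch t1 k1 y1 = mediant k1"
      using inv_branch_range(1)[of k1 y1 t1] inv_branch_range(1)[of k1 y2 t2] k y eq equal
      by (cases t1) (auto simp: branch_dom_def)
    thus ?thesis
      using inv_branch_range(3)[of k1 y1 t1] inv_branch_range(3)[of k1 y2 t2] k y eq equal by auto
  qed
qed

lemma branch_mat_inj: "k \<in> Kset q \<Longrightarrow> k' \<in> Kset q \<Longrightarrow> branch_mat t k = branch_mat t' k' \<Longrightarrow> k = k' \<and> t = t'"
  using inv_branch_eq_cases[of k k' "1/2" "1/2" t t'] by (auto simp: inv_branch_def)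

lemma farey_mat_den_pos:
  assumes "k \<in> Kset q" "x \<in> branch_dom t k"
  shows "0 < snd (mapply (farey_mat t k) (x,1))"
proof -
  note K = Kset_D[OF assms(1)]
  have "k - 1 + 1 = k" using K by simp
  hence "ratio k < x \<or> \<not> t" "x < ratio (k - 1) \<or> t"
    using assms ratio_less_mediant_less[OF assms(1)] by (auto simp: branch_dom_def)
  thus ?thesis using K unfolding ratio_def \<open>k - 1 + 1 = k\<close>
    by (cases t) (auto simp: farey_mat_eq mapply_def divide_less_eq less_divide_eq mult.commute)
qed

lemma inv_branch_farey_mat:
  assumes "k \<in> Kset q" "x \<in> branch_dom t k"
  shows "inv_branch t k (mob (farey_mat t k) x) = x"
proof -
  have "mob (mmul (branch_mat t k) (farey_mat t k)) x = inv_branch t k (mob (farey_mat t k) x)"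
    unfolding inv_branch_def using farey_mat_den_pos[OF assms] by (simp add: mob_mmul)
  thus ?thesis using branch_mat_farey_mat[OF assms(1)] by simp
qed

lemma farey_mat_unit:
  assumes "k \<in> Kset q" "x \<in> branch_dom t k"
  shows "mob (farey_mat t k) x \<in> {0..1}"
proof -
  note K = Kset_D[OF assms(1)]
  have den: "0 < snd (mapply (farey_mat t k) (x,1))" using farey_mat_den_pos[OF assms] .
  have "k - 1 + 1 = k" using K by simp
  hence "(sn (k + 1) \<le> sn k * x \<and> x * (sn (k - 1) + sn k) \<le> sn k + sn (k + 1)) \<or> t"
        "(sn (k - 1) * x \<le> sn k \<and> sn k + sn (k + 1) \<le> x * (sn (k - 1) + sn k)) \<or> \<not> t"
    using assms(2) K unfolding branch_dom_def ratio_def mediant_def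
    by (auto simp: divide_le_eq le_divide_eq mult.commute add_pos_pos split: if_splits)
  thus ?thesis using den K(1)
    by (cases t) (auto simp: farey_mat_eq mapply_def mob_def algebra_simps)
qed

lemma Fbranch_iff:
  "Fbranch q x y \<longleftrightarrow> (\<exists>k\<in>Kset q. \<exists>t. x \<in> branch_dom t k \<and> y = mob (farey_mat t k) x)"
proof -
  have ends: "mob (minv (farey_mat t k)) 0 = (if t then ratio (k - 1) else ratio k)"
             "mob (minv (farey_mat t k)) 1 = mediant k" if "k \<in> Kset q" for t k
    using inv_branch_0[OF that] inv_branch_1[OF that] minv_farey_mat[OF that]
    by (simp_all add: inv_branch_def)
  show ?thesis
    unfolding Fbranch_def
    using ends[of _ False] ends[of _ True]
    by (auto simp: farey_mat_def branch_dom_def)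
qed

lemma Fq_inv_branch: "k \<in> Kset q \<Longrightarrow> y \<in> {0..1} \<Longrightarrow> Fq q (inv_branch t k y) = y"
proof -
  assume k: "k \<in> Kset q" and y: "y \<in> {0..1}"
  let ?x = "inv_branch t k y"
  have dom: "?x \<in> branch_dom t k" using inv_branch_range(1) k y by auto
  have "Fbranch q ?x y"
    using inv_branch_inj[OF k _ _ inv_branch_farey_mat[OF k dom]] farey_mat_unit[OF k dom] y
    unfolding Fbranch_iff by (intro bexI[OF _ k] exI[of _ t]) (auto simp: dom)
  hence "Fbranch q ?x (Fq q ?x)" unfolding Fq_def by (rule someI)
  then obtain k' t' where "k' \<in> Kset q" "?x \<in> branch_dom t' k'" "Fq q ?x = mob (farey_mat t' k') ?x"
    unfolding Fbranch_iff by blast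
  thus ?thesis
    using inv_branch_eq_cases[OF k _ y, of k' "Fq q ?x" t t'] inv_branch_farey_mat farey_mat_unit
    by auto
qed

lemma ratio_nonneg: "1 \<le> j \<Longrightarrow> j < q \<Longrightarrow> 0 \<le> ratio j"
  unfolding ratio_def using sn_pos sn_nonneg by simp

lemma ratio_interval_cover:
  "j \<le> q - 1 \<Longrightarrow> qhalf \<le> j \<Longrightarrow> 0 \<le> x \<Longrightarrow> x \<le> ratio j \<Longrightarrow>
   \<exists>k\<in>Kset q. ratio k \<le> x \<and> x \<le> ratio (k - 1)"
proof (induction j rule: inc_induct)
  case base
  hence "x = 0" using ratio_q_minus_1 by simp
  hence "ratio (q - 1) \<le> x \<and> x \<le> ratio (q - 1 - 1)"
    using ratio_q_minus_1 ratio_nonneg[of "q - 1 - 1"] q_eq qhalf_pos by simp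
  moreover have "q - 1 \<in> Kset q" using Kset_eq q_eq qhalf_pos by auto
  ultimately show ?case by blast
next
  case (step j)
  show ?case
  proof (cases "ratio (Suc j) \<le> x")
    case True
    moreover have "Suc j \<in> Kset q" using step Kset_eq by auto
    ultimately show ?thesis using step.prems by auto
  next
    case False
    thus ?thesis using step by simp
  qed
qed

lemma branch_dom_cover: "x \<in> {0..1} \<Longrightarrow> \<exists>k\<in>Kset q. \<exists>t. x \<in> branch_dom t k"
proof -
  assume "x \<in> {0..1}"
  moreover have "qhalf \<le> q - 1" using q_eq by simp
  ultimately obtain k where "k \<in> Kset q" "ratio k \<le> x" "x \<le> ratio (k - 1)"
    using ratio_interval_cover[of qhalf x] ratio_qhalf q_eq by auto
  thus ?thesis by (intro bexI[of _ k] exI[of _ "mediant k \<le> x"]) (auto simp: branch_dom_def)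
qed

lemma branch_mat_False_GammaMat: "k \<in> Kset q \<Longrightarrow> branch_mat False k \<in> GammaMat q"
proof -
  assume "k \<in> Kset q"
  hence "1 \<le> k" using Kset_D(1)[of k] by simp
  moreover have "mmul (Vpow k) Sm = branch_mat False k"
    by (simp add: Vpow_def mmul_def Sm_def branch_mat_def)
  ultimately show ?thesis using GammaMat_mmul[OF Vpow_GammaMat Sm_GammaMat] by metis
qed

lemma reduced_frac_branch_mat:
  assumes "k \<in> Kset q" "reduced_frac q a c"
  shows "reduced_frac q (fst (mapply (branch_mat t k) (a,c))) (snd (mapply (branch_mat t k) (a,c)))"
proof -
  have G: "(sn k, sn (k + 1), sn (k - 1), sn k) \<in> GammaMat q"
    using branch_mat_False_GammaMat[OF assms(1)] by (simp add: branch_mat_def)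
  note rf = reduced_frac_mapply[OF G sn_Zlam sn_Zlam sn_Zlam sn_Zlam]
  have "mapply (branch_mat False k) (a,c) = (sn k * a + sn (k + 1) * c, sn (k - 1) * a + sn k * c)"
       "mapply (branch_mat True k) (a,c) = (sn k * c + sn (k + 1) * a, sn (k - 1) * c + sn k * a)"
    by (simp_all add: branch_mat_def mapply_def add.commute)
  thus ?thesis
    using rf[OF assms(2)] rf[OF reduced_frac_swap[OF assms(2)]] by (cases t) simp_all
qed

lemma reduced_frac_farey_mat:
  assumes "k \<in> Kset q" "reduced_frac q a c"
  shows "reduced_frac q (fst (mapply (farey_mat t k) (a,c))) (snd (mapply (farey_mat t k) (a,c)))"
proof -
  have G: "(sn k, - sn (k + 1), - sn (k - 1), sn k) \<in> GammaMat q"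
    using madj_GammaMat[OF branch_mat_False_GammaMat[OF assms(1)]]
    by (simp add: branch_mat_def madj_def)
  have rf: "reduced_frac q (sn k * a + - sn (k + 1) * c) (- sn (k - 1) * a + sn k * c)"
    using reduced_frac_mapply[OF G sn_Zlam Zlam_uminus Zlam_uminus sn_Zlam assms(2)] sn_Zlam by blast
  have "mapply (farey_mat False k) (a,c) = (sn k * a + - sn (k + 1) * c, - sn (k - 1) * a + sn k * c)"
       "mapply (farey_mat True k) (a,c) = (- sn (k - 1) * a + sn k * c, sn k * a + - sn (k + 1) * c)"
    using Kset_D(1)[OF assms(1)] by (simp_all add: farey_mat_eq mapply_def)
  thus ?thesis
    using rf reduced_frac_swap[OF rf] by (cases t) simp_all
qed

lemma branch_mat_snd_nonzero:
  assumes "k \<in> Kset q" "r \<noteq> 0" "0 \<le> p/r"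
  shows "snd (mapply (branch_mat t k) (p,r)) \<noteq> 0"
proof -
  have "snd (mapply (branch_mat t k) (p,r)) = r * snd (mapply (branch_mat t k) (p/r, 1))"
    using mapply_scale[of "branch_mat t k" r "p/r" 1] assms(2) by simp
  thus ?thesis
    using branch_mat_den_pos[OF assms(1,3), of t] assms(2) by simp
qed

end

section \<open>Words and preimages\<close>

lemma wprod_Nil [simp]: "wprod [] = mid"
  by (simp add: wprod_def)

lemma wprod_Cons [simp]: "wprod (M # ws) = mmul M (wprod ws)"
  by (simp add: wprod_def)

lemma wprod_snoc: "wprod (ws @ [M]) = mmul (wprod ws) M"
  by (induction ws) (simp_all add: mmul_assoc)

lemma Words_0: "Words q 0 = {[]}"
  unfolding Words_def by auto

lemma Words_Suc: "ws \<in> Words q (Suc n) \<longleftrightarrow> (\<exists>M ws'. ws = M # ws' \<and> M \<in> LamSet q \<and> ws' \<in> Words q n)"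
  unfolding Words_def by (cases ws) auto

lemma Words_snoc: "pre @ [M] \<in> Words q n \<longleftrightarrow> pre \<in> Words q (n - 1) \<and> M \<in> LamSet q \<and> 1 \<le> n"
  unfolding Words_def by auto

locale farey_target = odd_hecke +
  fixes v w :: real
  assumes reduced_vw: "reduced_frac q v w" and w_nonzero: "w \<noteq> 0"
    and vw_pos: "0 < v / w" and vw_le_1: "v / w \<le> 1"
begin

definition orbit :: "mat2 list \<Rightarrow> real \<times> real" where
  "orbit ws = mapply (wprod ws) (v,w)"

definition orbit_pt :: "mat2 list \<Rightarrow> real" where
  "orbit_pt ws = fst (orbit ws) / snd (orbit ws)"

lemma orbit_Nil [simp]: "orbit [] = (v,w)"
  by (simp add: orbit_def)

lemma orbit_Cons [simp]: "orbit (M # ws) = mapply M (orbit ws)"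
  by (simp add: orbit_def mapply_mmul)

lemma wmap_eq: "wmap v w ws = pmclass (fst (orbit ws)) (snd (orbit ws))"
  by (cases "wprod ws") (simp add: wmap_def orbit_def mapply_def)

lemma Words_Suc_branch_mat:
  "ws \<in> Words q (Suc n) \<longleftrightarrow> (\<exists>t k ws'. k \<in> Kset q \<and> ws = branch_mat t k # ws' \<and> ws' \<in> Words q n)"
  unfolding Words_Suc LamSet_eq by blast

lemma orbit_pt_Cons:
  assumes "k \<in> Kset q" "snd (orbit ws) \<noteq> 0" "0 \<le> orbit_pt ws"
  shows "snd (orbit (branch_mat t k # ws)) \<noteq> 0"
    and "orbit_pt (branch_mat t k # ws) = inv_branch t k (orbit_pt ws)"
  using branch_mat_snd_nonzero[OF assms(1,2), of "fst (orbit ws)" t]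
    mob_mapply_ratio[OF assms(2), of "branch_mat t k" "fst (orbit ws)"] assms(3)
  by (simp_all add: orbit_pt_def inv_branch_def)

lemma orbit_invariants:
  assumes "ws \<in> Words q n"
  shows "snd (orbit ws) \<noteq> 0 \<and> reduced_frac q (fst (orbit ws)) (snd (orbit ws)) \<and>
    orbit_pt ws \<in> {0<..1} \<and> ((v/w < 1 \<or> 1 \<le> n) \<longrightarrow> orbit_pt ws < 1) \<and>
    (Fq q ^^ n) (orbit_pt ws) = v/w"
  using assms
proof (induction n arbitrary: ws)
  case 0
  thus ?case using reduced_vw w_nonzero vw_pos vw_le_1 by (simp add: Words_0 orbit_pt_def)
next
  case (Suc n)
  then obtain t k ws' where ws: "k \<in> Kset q" "ws = branch_mat t k # ws'" "ws' \<in> Words q n"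
    using Words_Suc_branch_mat by blast
  note IH = Suc.IH[OF ws(3)]
  let ?y = "orbit_pt ws'"
  have y: "?y \<in> {0..1}" using IH by auto
  have "(Fq q ^^ Suc n) (inv_branch t k ?y) = (Fq q ^^ n) ?y"
    using Fq_inv_branch[OF ws(1) y] by (simp only: funpow_Suc_right comp_def)
  thus ?case
    using orbit_pt_Cons[OF ws(1), of ws' t] IH ws(2) inv_branch_open_unit[OF ws(1), of ?y t]
      reduced_frac_branch_mat[OF ws(1), of "fst (orbit ws')" "snd (orbit ws')" t]
    by (auto simp: less_imp_le)
qed

lemma orbit_pt_Cons_Words:
  "ws \<in> Words q n \<Longrightarrow> k \<in> Kset q \<Longrightarrow> orbit_pt (branch_mat t k # ws) = inv_branch t k (orbit_pt ws)"
  using orbit_pt_Cons orbit_invariants by (simp add: less_imp_le)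

lemma orbit_pt_eq_mob: "orbit_pt ws = mob (wprod ws) (v / w)"
  unfolding orbit_pt_def orbit_def by (rule mob_mapply_ratio[OF w_nonzero])

lemma wmap_in_RF: "ws \<in> Words q n \<Longrightarrow> wmap v w ws \<in> RF q n v w"
  using orbit_invariants[of ws n] unfolding RF_def wmap_eq orbit_pt_def by fastforce

text \<open>The base case \<open>n = 0\<close> is the uniqueness of reduced fractions.\<close>
lemma RF_orbit:
  "reduced_frac q r s \<Longrightarrow> s \<noteq> 0 \<Longrightarrow> r/s \<in> {0..1} \<Longrightarrow> (Fq q ^^ n) (r/s) = v/w \<Longrightarrow>
   \<exists>ws\<in>Words q n. orbit ws = (r,s) \<or> orbit ws = (-r,-s)"
proof (induction n arbitrary: r s)
  case 0
  hence "v * s = w * r" using w_nonzero by (simp add: frac_eq_eq mult.commute)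
  hence "(r = v \<and> s = w) \<or> (r = -v \<and> s = -w)"
    using reduced_frac_unique[OF reduced_vw "0.prems"(1)] by simp
  thus ?case by (auto simp: Words_0)
next
  case (Suc n)
  obtain k t where k: "k \<in> Kset q" "r/s \<in> branch_dom t k"
    using branch_dom_cover[OF Suc.prems(3)] by blast
  obtain r' s' where rs': "mapply (farey_mat t k) (r,s) = (r',s')" by fastforce
  have "snd (mapply (farey_mat t k) (r,s)) = s * snd (mapply (farey_mat t k) (r/s, 1))"
    using mapply_scale[of "farey_mat t k" s "r/s" 1] Suc.prems(2) by simp
  hence s': "s' \<noteq> 0" using farey_mat_den_pos[OF k] Suc.prems(2) rs' by simp
  have y: "r'/s' = mob (farey_mat t k) (r/s)"
    using mob_mapply_ratio[OF Suc.prems(2), of "farey_mat t k" r] rs' by simp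
  have x: "r/s = inv_branch t k (r'/s')"
    unfolding y using inv_branch_farey_mat[OF k] by simp
  have unit: "r'/s' \<in> {0..1}" unfolding y using farey_mat_unit[OF k] .
  have "(Fq q ^^ n) (r'/s') = v/w"
    using Suc.prems(4) Fq_inv_branch[OF k(1) unit, of t] x by (simp only: funpow_Suc_right comp_def)
  moreover have "reduced_frac q r' s'"
    using reduced_frac_farey_mat[OF k(1) Suc.prems(1), of t] rs' by simp
  ultimately obtain ws' where ws': "ws' \<in> Words q n" "orbit ws' = (r',s') \<or> orbit ws' = (-r',-s')"
    using Suc.IH s' unit by blast
  have "mapply (branch_mat t k) (r',s') = (r,s)"
    using rs' branch_mat_farey_mat[OF k(1), of t] by (metis mapply_mmul mapply_mid)
  hence "orbit (branch_mat t k # ws') = (r,s) \<or> orbit (branch_mat t k # ws') = (-r,-s)"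
    using ws'(2) mapply_uminus[of "branch_mat t k" r' s'] by auto
  moreover have "branch_mat t k # ws' \<in> Words q (Suc n)"
    using Words_Suc_branch_mat k(1) ws'(1) by blast
  ultimately show ?case by blast
qed

lemma image_wmap: "wmap v w ` Words q n = RF q n v w"
proof
  show "wmap v w ` Words q n \<subseteq> RF q n v w" using wmap_in_RF by blast
next
  show "RF q n v w \<subseteq> wmap v w ` Words q n"
  proof
    fix x assume "x \<in> RF q n v w"
    then obtain r s where x: "x = pmclass r s" "reduced_frac q r s" "s \<noteq> 0" "r/s \<in> {0..1}"
      "(Fq q ^^ n) (r/s) = v/w" unfolding RF_def by blast
    then obtain ws where ws: "ws \<in> Words q n" "orbit ws = (r,s) \<or> orbit ws = (-r,-s)"
      using RF_orbit by blast
    hence "wmap v w ws = x" using x(1) by (auto simp: wmap_eq pmclass_uminus)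
    thus "x \<in> wmap v w ` Words q n" using ws(1) by blast
  qed
qed

lemma wmap_eq_imp_orbit_pt_eq: "wmap v w ws1 = wmap v w ws2 \<Longrightarrow> orbit_pt ws1 = orbit_pt ws2"
  unfolding wmap_eq orbit_pt_def by (rule pmclass_eq_ratio[symmetric])

lemma orbit_pt_inj:
  "v/w < 1 \<Longrightarrow> ws1 \<in> Words q n \<Longrightarrow> ws2 \<in> Words q n \<Longrightarrow> orbit_pt ws1 = orbit_pt ws2 \<Longrightarrow> ws1 = ws2"
proof (induction n arbitrary: ws1 ws2)
  case 0
  thus ?case by (simp add: Words_0)
next
  case (Suc n)
  obtain t1 k1 u1 where 1: "k1 \<in> Kset q" "ws1 = branch_mat t1 k1 # u1" "u1 \<in> Words q n"
    using Suc.prems Words_Suc_branch_mat by blast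
  obtain t2 k2 u2 where 2: "k2 \<in> Kset q" "ws2 = branch_mat t2 k2 # u2" "u2 \<in> Words q n"
    using Suc.prems Words_Suc_branch_mat by blast
  have y: "orbit_pt u1 \<in> {0<..<1}" "orbit_pt u2 \<in> {0<..<1}"
    using orbit_invariants[OF 1(3)] orbit_invariants[OF 2(3)] Suc.prems(1) by auto
  have "inv_branch t1 k1 (orbit_pt u1) = inv_branch t2 k2 (orbit_pt u2)"
    using Suc.prems(4) 1 2 orbit_pt_Cons_Words by simp
  hence "orbit_pt u1 = orbit_pt u2 \<and> k1 = k2 \<and> t1 = t2"
    using inv_branch_eq_cases[OF 1(1) 2(1), of "orbit_pt u1" "orbit_pt u2" t1 t2] y by auto
  thus ?case using Suc.IH[OF Suc.prems(1) 1(3) 2(3)] 1 2 by simp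
qed

text \<open>For \<open>v/w = 1\<close> the two branches for \<open>k\<close> meet at the preimage \<open>mediant k\<close> of \<open>1\<close>, so
  words with the same image may differ in their last letter.\<close>
lemma orbit_pt_eq_last:
  "v/w = 1 \<Longrightarrow> 1 \<le> n \<Longrightarrow> ws1 \<in> Words q n \<Longrightarrow> ws2 \<in> Words q n \<Longrightarrow> orbit_pt ws1 = orbit_pt ws2 \<Longrightarrow>
   \<exists>pre k t1 t2. k \<in> Kset q \<and> ws1 = pre @ [branch_mat t1 k] \<and> ws2 = pre @ [branch_mat t2 k]"
proof (induction n arbitrary: ws1 ws2)
  case 0
  thus ?case by simp
next
  case (Suc n)
  obtain t1 k1 u1 where 1: "k1 \<in> Kset q" "ws1 = branch_mat t1 k1 # u1" "u1 \<in> Words q n"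
    using Suc.prems Words_Suc_branch_mat by blast
  obtain t2 k2 u2 where 2: "k2 \<in> Kset q" "ws2 = branch_mat t2 k2 # u2" "u2 \<in> Words q n"
    using Suc.prems Words_Suc_branch_mat by blast
  have eq: "inv_branch t1 k1 (orbit_pt u1) = inv_branch t2 k2 (orbit_pt u2)"
    using Suc.prems(5) 1 2 orbit_pt_Cons_Words by simp
  show ?case
  proof (cases "n = 0")
    case True
    hence "u1 = []" "u2 = []" using 1(3) 2(3) by (simp_all add: Words_0)
    moreover have "orbit_pt [] = v/w" by (simp add: orbit_pt_def)
    ultimately have "k1 = k2"
      using inv_branch_eq_cases[OF 1(1) 2(1), of 1 1 t1 t2] eq Suc.prems(1) by auto
    thus ?thesis using 1 2 \<open>u1 = []\<close> \<open>u2 = []\<close> by (intro exI[of _ "[]"]) auto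
  next
    case False
    have y: "orbit_pt u1 \<in> {0<..<1}" "orbit_pt u2 \<in> {0<..<1}"
      using orbit_invariants[OF 1(3)] orbit_invariants[OF 2(3)] False by auto
    hence "orbit_pt u1 = orbit_pt u2 \<and> k1 = k2 \<and> t1 = t2"
      using inv_branch_eq_cases[OF 1(1) 2(1), of "orbit_pt u1" "orbit_pt u2" t1 t2] eq by auto
    then obtain pre k t1' t2' where "k \<in> Kset q" "u1 = pre @ [branch_mat t1' k]" "u2 = pre @ [branch_mat t2' k]"
      using Suc.IH[OF Suc.prems(1) _ 1(3) 2(3)] False by auto
    thus ?thesis using 1 2 \<open>orbit_pt u1 = orbit_pt u2 \<and> k1 = k2 \<and> t1 = t2\<close>
      by (intro exI[of _ "branch_mat t1 k1 # pre"]) auto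
  qed
qed

lemma bij_betw_wmap:
  assumes "v/w < 1"
  shows "bij_betw (wmap v w) (Words q n) (RF q n v w)"
proof -
  have "inj_on (wmap v w) (Words q n)"
  proof (rule inj_onI)
    fix ws1 ws2 assume "ws1 \<in> Words q n" "ws2 \<in> Words q n" "wmap v w ws1 = wmap v w ws2"
    thus "ws1 = ws2" using orbit_pt_inj[OF assms] wmap_eq_imp_orbit_pt_eq by blast
  qed
  thus ?thesis unfolding bij_betw_def using image_wmap by blast
qed

lemma orbit_snoc_branch_mat:
  assumes "v = w"
  shows "orbit (pre @ [branch_mat t k]) = orbit (pre @ [branch_mat t' k])"
proof -
  have "mapply (branch_mat t k) (v,w) = mapply (branch_mat t' k) (v,w)"
    using assms by (cases t; cases t') (simp_all add: branch_mat_def mapply_def algebra_simps)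
  thus ?thesis by (simp add: orbit_def wprod_snoc mapply_mmul)
qed

lemma wmap_fibre:
  assumes "v/w = 1" "1 \<le> n" "ws0 \<in> Words q n"
  shows "card {ws \<in> Words q n. wmap v w ws = wmap v w ws0} = 2"
proof -
  have "v = w" using assms(1) w_nonzero by simp
  obtain pre k t0 where k: "k \<in> Kset q" "ws0 = pre @ [branch_mat t0 k]"
    using orbit_pt_eq_last[OF assms(1,2,3,3) refl] by blast
  have "branch_mat t k \<in> LamSet q" for t
    using k(1) unfolding LamSet_eq by blast
  hence words: "pre @ [branch_mat t k] \<in> Words q n" for t
    using assms(3) k(2) by (simp add: Words_snoc)
  have "{ws \<in> Words q n. wmap v w ws = wmap v w ws0} = {pre @ [branch_mat False k], pre @ [branch_mat True k]}"
  proof (intro set_eqI iffI)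
    fix ws assume "ws \<in> {ws \<in> Words q n. wmap v w ws = wmap v w ws0}"
    hence ws: "ws \<in> Words q n" "wmap v w ws = wmap v w ws0" by simp_all
    obtain pre' k' t1 t2 where L: "k' \<in> Kset q" "ws0 = pre' @ [branch_mat t1 k']"
      "ws = pre' @ [branch_mat t2 k']"
      using orbit_pt_eq_last[OF assms(1,2,3) ws(1) wmap_eq_imp_orbit_pt_eq[OF ws(2)[symmetric]]]
      by blast
    hence "pre' = pre" "branch_mat t1 k' = branch_mat t0 k" using k(2) by simp_all
    hence "ws = pre @ [branch_mat t2 k]" using branch_mat_inj[OF L(1) k(1)] L(3) by blast
    thus "ws \<in> {pre @ [branch_mat False k], pre @ [branch_mat True k]}" by (cases t2) simp_all
  next
    have "wmap v w (pre @ [branch_mat t k]) = wmap v w ws0" for t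
      using k(2) orbit_snoc_branch_mat[OF \<open>v = w\<close>, of pre t k t0] by (simp add: wmap_eq)
    moreover fix ws assume "ws \<in> {pre @ [branch_mat False k], pre @ [branch_mat True k]}"
    ultimately show "ws \<in> {ws \<in> Words q n. wmap v w ws = wmap v w ws0}"
      using words by blast
  qed
  moreover have "branch_mat False k \<noteq> branch_mat True k"
    using branch_mat_inj[OF k(1) k(1)] by blast
  ultimately show ?thesis by simp
qed

end

theorem lemma4p3:
  fixes q n :: nat and v w :: real
  assumes "odd q" and "q \<ge> 3"
    and "reduced_frac q v w" and "w \<noteq> 0" and "0 < v / w" and "v / w \<le> 1"
  shows "(\<forall>ws \<in> Words q n. wmap v w ws \<in> RF q n v w \<and>
            (case wprod ws of (a,b,c,d) \<Rightarrow>
               reduced_frac q (a*v + b*w) (c*v + d*w) \<and> c*v + d*w \<noteq> 0 \<and>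
               (a*v + b*w) / (c*v + d*w) = mob (wprod ws) (v / w)))
       \<and> (v / w < 1 \<longrightarrow> bij_betw (wmap v w) (Words q n) (RF q n v w))
       \<and> (v / w = 1 \<longrightarrow> wmap v w ` Words q n = RF q n v w \<and>
            (n \<ge> 1 \<longrightarrow> (\<forall>x \<in> RF q n v w. card {ws \<in> Words q n. wmap v w ws = x} = 2)))"
proof -
  interpret farey_target q v w
    using assms by unfold_locales auto
  show ?thesis
  proof (intro conjI impI ballI)
    fix ws assume ws: "ws \<in> Words q n"
    thus "wmap v w ws \<in> RF q n v w" by (rule wmap_in_RF)
    show "case wprod ws of (a,b,c,d) \<Rightarrow>
        reduced_frac q (a*v + b*w) (c*v + d*w) \<and> c*v + d*w \<noteq> 0 \<and>
        (a*v + b*w) / (c*v + d*w) = mob (wprod ws) (v / w)"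
      using orbit_invariants[OF ws] orbit_pt_eq_mob[of ws]
      by (cases "wprod ws") (simp add: orbit_def orbit_pt_def mapply_def)
  next
    show "bij_betw (wmap v w) (Words q n) (RF q n v w)" if "v/w < 1"
      using bij_betw_wmap[OF that] .
  next
    show "wmap v w ` Words q n = RF q n v w" by (rule image_wmap)
  next
    fix x assume "v/w = 1" "1 \<le> n" "x \<in> RF q n v w"
    moreover obtain ws0 where "ws0 \<in> Words q n" "x = wmap v w ws0"
      using \<open>x \<in> RF q n v w\<close> image_wmap by blast
    ultimately show "card {ws \<in> Words q n. wmap v w ws = x} = 2"
      using wmap_fibre by simp
  qed
qed

end
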